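(* Let $\alpha>0$. The convex hull of $$\left\{\left(\frac{p_2(\mathbf x)}{\alpha^2},\frac{p_3(\mathbf x)}{\alpha^3}\right):\ \mathbf x\in\mathbf X,\ p_1(\mathbf x)=\alpha\right\}$$ is equal to the convex hull of $\{(1/m,1/m^2): m\in\mathbb{N}^+\}$.
   Context: $\mathbf X$ is the set of infinite sequences $\mathbf x=(x_1,x_2,\dots)$ of reals with $x_1\ge x_2\ge\cdots\ge0$ (those with $p_1(\mathbf x)=\alpha$ finite are considered). $p_j(\mathbf x)=\sum_i x_i^j$ denotes the $j$-th power sum. *)

theory Defs
  imports "HOL-Analysis.Analysis"
begin

text \<open>The set X: non-increasing, nonnegative real sequences (indexed from 0)
  with finite p_1, i.e. summable.\<close>
definition seqX :: "(nat \<Rightarrow> real) set" where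
  "seqX = {x. (\<forall>i. x (Suc i) \<le> x i) \<and> (\<forall>i. 0 \<le> x i) \<and> summable x}"

definition psum :: "nat \<Rightarrow> (nat \<Rightarrow> real) \<Rightarrow> real" where
  "psum j x = (\<Sum>i. x i ^ j)"

end

theory Submission
  imports Defs
begin

text \<open>After scaling to \<open>p\<^sub>1 = 1\<close>, write \<open>s = p\<^sub>2\<close> and \<open>t = p\<^sub>3\<close>; then \<open>t \<le> s \<le> 1\<close>.
  The key fact is that \<open>(s, t)\<close> lies on or above every line through two consecutive vertices
  \<open>(1/m, 1/m\<^sup>2)\<close>, \<open>(1/(m+1), 1/(m+1)\<^sup>2)\<close>. With
  \<open>H\<^sub>m x = x (m x - 1) ((m+1) x - 1)\<close> this reads \<open>\<Sum>\<^sub>i H\<^sub>m x\<^sub>i \<ge> 0\<close>.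
  \<open>H\<^sub>m\<close> is concave below its inflection point \<open>(2m+1)/(3m(m+1))\<close> and convex above it, so for
  finitely many entries two entries below the inflection point may be merged without increasing
  the sum, and once at most one such entry is left the others may be replaced by their mean; the
  resulting two-valued configuration is checked directly. For infinite sequences one passes to
  the limit. Taking \<open>1/(m+1) < s \<le> 1/m\<close> gives a point of the hull below \<open>(s, t)\<close>, and the chord
  from \<open>(1, 1)\<close> to a far vertex \<open>(1/M, 1/M\<^sup>2)\<close> passes above it. Conversely, the vertex
  \<open>(1/m, 1/m\<^sup>2)\<close> is attained by \<open>m\<close> equal entries.\<close>

text \<open>If \<open>\<Sum>\<^sub>i y\<^sub>i = 1\<close>, then \<open>\<Sum>\<^sub>i chord_cubic m y\<^sub>i = m(m+1) p\<^sub>3 - (2m+1) p\<^sub>2 + 1\<close>.\<close>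
definition chord_cubic :: "nat \<Rightarrow> real \<Rightarrow> real" where
  "chord_cubic m x = x * (real m * x - 1) * ((real m + 1) * x - 1)"

lemma chord_cubic_merge:
  "chord_cubic m (x + y) - chord_cubic m x - chord_cubic m y
     = x * y * (3 * real m * (real m + 1) * (x + y) - 2 * (2 * real m + 1))"
  unfolding chord_cubic_def by (simp add: algebra_simps power2_eq_square)

lemma chord_cubic_tangent:
  "chord_cubic m x - chord_cubic m u
       - (3 * real m * (real m + 1) * u\<^sup>2 - 2 * (2 * real m + 1) * u + 1) * (x - u)
     = (x - u)\<^sup>2 * (real m * (real m + 1) * (x + 2 * u) - (2 * real m + 1))"
  unfolding chord_cubic_def by (simp add: algebra_simps power2_eq_square)

lemma chord_cubic_equal_parts:
  "real m * chord_cubic m u + chord_cubic m (1 - real m * u)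
     = real m * (real m - 1) * (1 - real m * u) * (1 - (real m + 1) * u)\<^sup>2"
  unfolding chord_cubic_def by (simp add: algebra_simps power2_eq_square)

lemma chord_cubic_nonneg:
  assumes "0 \<le> x" and "(real m + 1) * x \<le> 1 \<or> 1 \<le> real m * x"
  shows "0 \<le> chord_cubic m x"
proof -
  have "real m * x \<le> (real m + 1) * x"
    using assms(1) by (simp add: algebra_simps)
  then have "0 \<le> (real m * x - 1) * ((real m + 1) * x - 1)"
    using assms(2) by (auto intro: mult_nonpos_nonpos mult_nonneg_nonneg)
  then show ?thesis
    unfolding chord_cubic_def using assms(1) by (metis mult.assoc mult_nonneg_nonneg)
qed

lemma chord_cubic_cluster_nonneg:
  fixes m k :: nat and u r :: real
  assumes m: "m \<ge> 1" and total: "real k * u + r = 1" and r0: "0 \<le> r"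
    and r_small: "3 * real m * (real m + 1) * r \<le> 2 * real m + 1"
    and u_large: "3 * real m * (real m + 1) * u > 2 * real m + 1"
  shows "0 \<le> real k * chord_cubic m u + chord_cubic m r"
proof -
  have m1: "real m \<ge> 1" using m by simp
  have "3 * real m * ((real m + 1) * r) \<le> 3 * real m * 1"
    using r_small m1 by (simp add: algebra_simps)
  then have "(real m + 1) * r \<le> 1" using m1 by simp
  then have Hr: "0 \<le> chord_cubic m r" using r0 by (intro chord_cubic_nonneg) auto
  have "0 < 3 * real m * (real m + 1) * u" using u_large by linarith
  then have u0: "u > 0" by (rule zero_less_mult_pos) (use m1 in simp)
  show ?thesis
  proof (cases "(real m + 1) * u \<le> 1 \<or> 1 \<le> real m * u")
    case True
    then have "0 \<le> chord_cubic m u" using u0 by (intro chord_cubic_nonneg) auto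
    then show ?thesis using Hr by simp
  next
    case False
    then have mu: "1 < (real m + 1) * u" "real m * u < 1" by auto
    have "real k * u < (real m + 1) * u" using total r0 mu by simp
    then have "k \<le> m" using u0 by simp
    moreover have "\<not> k \<le> m - 1"
    proof
      assume "k \<le> m - 1"
      then have "real k * u \<le> (real m - 1) * u" using u0 m by (simp add: mult_right_mono)
      then have "1 - (real m - 1) * u \<le> r" using total by simp
      then have "real m * (1 - (real m - 1) * u) \<le> real m * r" by (rule mult_left_mono) simp
      then have "real m * r \<ge> real m - (real m - 1) * (real m * u)"
        by (simp add: algebra_simps)
      moreover have "(real m - 1) * (real m * u) \<le> real m - 1"
        using mu m1 by (simp add: mult_left_le)
      ultimately have "real m * r \<ge> 1" by simp
      then have "3 * (real m + 1) * (real m * r) \<ge> 3 * (real m + 1)" by simp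
      then show False using r_small m1 by (simp add: algebra_simps)
    qed
    ultimately have "k = m" by simp
    then have "real k * chord_cubic m u + chord_cubic m r
        = real m * (real m - 1) * (1 - real m * u) * (1 - (real m + 1) * u)\<^sup>2"
      using chord_cubic_equal_parts total by (metis add_diff_cancel_left')
    also have "\<dots> \<ge> 0" using m1 mu by (intro mult_nonneg_nonneg) auto
    finally show ?thesis .
  qed
qed

lemma card_chord_cubic_mean_le_sum:
  assumes "finite B" and large: "\<forall>i\<in>B. 2 * real m + 1 < 3 * real m * (real m + 1) * f i"
    and u_large: "2 * real m + 1 < 3 * real m * (real m + 1) * u"
    and mean: "real (card B) * u = sum f B"
  shows "real (card B) * chord_cubic m u \<le> (\<Sum>i\<in>B. chord_cubic m (f i))"
proof -
  define slope where "slope = 3 * real m * (real m + 1) * u\<^sup>2 - 2 * (2 * real m + 1) * u + 1"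
  have "chord_cubic m u + slope * (f i - u) \<le> chord_cubic m (f i)" if "i \<in> B" for i
  proof -
    have "3 * (real m * (real m + 1) * (f i + 2 * u))
        = 3 * real m * (real m + 1) * f i + 2 * (3 * real m * (real m + 1) * u)"
      by (simp add: algebra_simps)
    then have "0 \<le> real m * (real m + 1) * (f i + 2 * u) - (2 * real m + 1)"
      using large that u_large by fastforce
    then have "0 \<le> (f i - u)\<^sup>2 * (real m * (real m + 1) * (f i + 2 * u) - (2 * real m + 1))"
      by simp
    then show ?thesis using chord_cubic_tangent[of m "f i" u] unfolding slope_def by linarith
  qed
  then have "(\<Sum>i\<in>B. chord_cubic m u + slope * (f i - u)) \<le> (\<Sum>i\<in>B. chord_cubic m (f i))"
    by (rule sum_mono)
  moreover have "(\<Sum>i\<in>B. chord_cubic m u + slope * (f i - u))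
      = real (card B) * chord_cubic m u + slope * (sum f B - real (card B) * u)"
    by (simp add: sum.distrib sum_distrib_left sum_subtractf algebra_simps)
  ultimately show ?thesis using mean by simp
qed

lemma mean_gt_of_all_gt:
  fixes f :: "'a \<Rightarrow> real"
  assumes "finite B" "B \<noteq> {}" "\<forall>i\<in>B. a < f i"
  shows "a < sum f B / real (card B)"
proof -
  have "(\<Sum>i\<in>B. a) < sum f B" using assms by (intro sum_strict_mono) auto
  moreover have "0 < real (card B)" using assms(1,2) by (simp add: card_gt_0_iff)
  ultimately show ?thesis by (simp add: pos_less_divide_eq mult.commute)
qed

lemma sum_chord_cubic_nonneg_at_most_one_small:
  fixes f :: "'a \<Rightarrow> real"
  assumes m: "m \<ge> 1" and fin: "finite I" and nn: "\<forall>i\<in>I. 0 \<le> f i" and total: "sum f I = 1"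
    and one_small: "\<forall>i\<in>I. \<forall>j\<in>I. 3 * real m * (real m + 1) * f i \<le> 2 * real m + 1 \<longrightarrow>
        3 * real m * (real m + 1) * f j \<le> 2 * real m + 1 \<longrightarrow> i = j"
  shows "0 \<le> (\<Sum>i\<in>I. chord_cubic m (f i))"
proof -
  let ?c = "3 * real m * (real m + 1)"
  define B where "B = {i\<in>I. 2 * real m + 1 < ?c * f i}"
  define S where "S = I - B"
  have finB: "finite B" using fin by (simp add: B_def)
  have split: "sum g I = sum g B + sum g S" for g :: "'a \<Rightarrow> real"
    using sum.subset_diff[of B I g] fin unfolding S_def by (auto simp: B_def)
  obtain r where r: "sum f S = r" "(\<Sum>i\<in>S. chord_cubic m (f i)) = chord_cubic m r"
    "0 \<le> r" "?c * r \<le> 2 * real m + 1"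
  proof (cases "S = {}")
    case True
    then show ?thesis using that[of 0] by (simp add: chord_cubic_def)
  next
    case False
    then obtain i0 where "i0 \<in> S" by blast
    then have i0: "i0 \<in> I" "?c * f i0 \<le> 2 * real m + 1" by (auto simp: S_def B_def)
    have "j = i0" if "j \<in> S" for j
    proof -
      have "j \<in> I" "?c * f j \<le> 2 * real m + 1" using that by (auto simp: S_def B_def)
      then show ?thesis using one_small i0 by blast
    qed
    then have "S = {i0}" using \<open>i0 \<in> S\<close> by blast
    then show ?thesis using that[of "f i0"] nn i0 by simp
  qed
  have "B \<noteq> {}"
  proof
    assume "B = {}"
    then have "r = 1" using split[of f] total r(1) by simp
    then have "?c \<le> 2 * real m + 1" using r(4) by simp
    moreover have "?c = 3 * (real m * real m) + 3 * real m" by (simp add: algebra_simps)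
    moreover have "real m \<le> real m * real m" "1 \<le> real m" using m by auto
    ultimately show False by linarith
  qed
  define u where "u = sum f B / real (card B)"
  have k1: "card B \<ge> 1" using finB \<open>B \<noteq> {}\<close> by (simp add: Suc_le_eq card_gt_0_iff)
  have mean: "real (card B) * u = sum f B" using k1 by (simp add: u_def)
  have u_large: "2 * real m + 1 < ?c * u"
  proof -
    have "(2 * real m + 1) / ?c < u"
      unfolding u_def using finB \<open>B \<noteq> {}\<close> m
      by (intro mean_gt_of_all_gt) (auto simp: B_def pos_divide_less_eq mult.commute)
    then show ?thesis using m by (simp add: pos_divide_less_eq mult.commute)
  qed
  have "real (card B) * chord_cubic m u \<le> (\<Sum>i\<in>B. chord_cubic m (f i))"
    using finB u_large mean by (intro card_chord_cubic_mean_le_sum) (auto simp: B_def)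
  moreover have "real (card B) * u + r = 1" using mean split[of f] total r(1) by simp
  then have "0 \<le> real (card B) * chord_cubic m u + chord_cubic m r"
    using chord_cubic_cluster_nonneg[OF m _ r(3,4) u_large] by simp
  ultimately show ?thesis using split[of "\<lambda>i. chord_cubic m (f i)"] r(2) by simp
qed

lemma sum_merge_two:
  fixes h :: "real \<Rightarrow> real"
  assumes "finite I" "i \<in> I" "j \<in> I" "i \<noteq> j"
  shows "(\<Sum>k\<in>I - {j}. h ((f(i := f i + f j)) k))
       = h (f i + f j) + (\<Sum>k\<in>I. h (f k)) - h (f i) - h (f j)"
proof -
  have "(\<Sum>k\<in>I - {j}. h ((f(i := f i + f j)) k))
      = h (f i + f j) + (\<Sum>k\<in>I - {j} - {i}. h (f k))"
    using assms by (simp add: sum.remove[of "I - {j}" i])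
  moreover have "(\<Sum>k\<in>I. h (f k)) = h (f i) + h (f j) + (\<Sum>k\<in>I - {j} - {i}. h (f k))"
    using assms by (simp add: sum.remove[of I i] sum.remove[of "I - {i}" j] insert_commute Diff_insert2[symmetric])
  ultimately show ?thesis by simp
qed

lemma sum_chord_cubic_nonneg:
  fixes f :: "'a \<Rightarrow> real"
  assumes m: "m \<ge> 1" and "finite I" "\<forall>i\<in>I. 0 \<le> f i" "sum f I = 1"
  shows "0 \<le> (\<Sum>i\<in>I. chord_cubic m (f i))"
  using assms(2-4)
proof (induction "card I" arbitrary: I f rule: less_induct)
  case less
  let ?small = "\<lambda>x. 3 * real m * (real m + 1) * x \<le> 2 * real m + 1"
  show ?case
  proof (cases "\<exists>i\<in>I. \<exists>j\<in>I. i \<noteq> j \<and> ?small (f i) \<and> ?small (f j)")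
    case True
    then obtain i j where ij: "i \<in> I" "j \<in> I" "i \<noteq> j" "?small (f i)" "?small (f j)" by blast
    define g where "g = f(i := f i + f j)"
    have "card (I - {j}) < card I" using less.prems(1) ij(2) by (rule card_Diff1_less)
    moreover have "\<forall>k\<in>I - {j}. 0 \<le> g k" using less.prems(2) ij by (auto simp: g_def)
    moreover have "sum g (I - {j}) = 1"
      using sum_merge_two[OF less.prems(1) ij(1-3), of "\<lambda>x. x" f] less.prems(3)
      by (simp add: g_def)
    ultimately have "0 \<le> (\<Sum>k\<in>I - {j}. chord_cubic m (g k))"
      using less.hyps less.prems(1) by blast
    also have "\<dots> \<le> (\<Sum>k\<in>I. chord_cubic m (f k))"
    proof -
      have "0 \<le> f i * f j" using less.prems(2) ij by simp
      moreover have "3 * real m * (real m + 1) * (f i + f j) \<le> 2 * (2 * real m + 1)"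
        using ij(4,5) by (simp add: distrib_left)
      ultimately have "chord_cubic m (f i + f j) - chord_cubic m (f i) - chord_cubic m (f j) \<le> 0"
        unfolding chord_cubic_merge by (simp add: mult_nonneg_nonpos)
      then show ?thesis
        using sum_merge_two[OF less.prems(1) ij(1-3), of "chord_cubic m" f] by (simp add: g_def)
    qed
    finally show ?thesis .
  next
    case False
    then show ?thesis using sum_chord_cubic_nonneg_at_most_one_small[OF m less.prems] by blast
  qed
qed

lemma chord_inequality_finite:
  fixes y :: "'a \<Rightarrow> real"
  assumes m: "m \<ge> 1" and fin: "finite I" and nn: "\<forall>i\<in>I. 0 \<le> y i"
  shows "0 \<le> real m * (real m + 1) * (\<Sum>i\<in>I. y i ^ 3)
    - (2 * real m + 1) * (\<Sum>i\<in>I. y i ^ 2) * sum y I + (sum y I) ^ 3"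
proof (cases "sum y I = 0")
  case True
  then have "\<forall>i\<in>I. y i = 0" using fin nn by (simp add: sum_nonneg_eq_0_iff)
  then show ?thesis by simp
next
  case False
  define \<sigma> where "\<sigma> = sum y I"
  have "\<sigma> > 0" using False nn unfolding \<sigma>_def by (simp add: order_le_neq_trans[OF sum_nonneg])
  then have "0 \<le> \<sigma> ^ 3 * (\<Sum>i\<in>I. chord_cubic m (y i / \<sigma>))"
    using sum_chord_cubic_nonneg[OF m fin, of "\<lambda>i. y i / \<sigma>"] nn
    by (simp add: sum_divide_distrib[symmetric] \<sigma>_def[symmetric])
  also have "\<sigma> ^ 3 * (\<Sum>i\<in>I. chord_cubic m (y i / \<sigma>))
      = (\<Sum>i\<in>I. real m * (real m + 1) * y i ^ 3 - (2 * real m + 1) * \<sigma> * y i ^ 2 + \<sigma>\<^sup>2 * y i)"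
    unfolding sum_distrib_left
    by (rule sum.cong) (use \<open>\<sigma> > 0\<close> in \<open>simp_all add: chord_cubic_def field_simps power2_eq_square power3_eq_cube\<close>)
  also have "\<dots> = real m * (real m + 1) * (\<Sum>i\<in>I. y i ^ 3)
      - (2 * real m + 1) * (\<Sum>i\<in>I. y i ^ 2) * \<sigma> + \<sigma> ^ 3"
    unfolding \<sigma>_def
    by (simp add: sum.distrib sum_subtractf sum_distrib_left power3_eq_cube power2_eq_square algebra_simps)
  finally show ?thesis unfolding \<sigma>_def .
qed

lemma summable_power_nonneg:
  fixes y :: "nat \<Rightarrow> real"
  assumes nn: "\<And>i. 0 \<le> y i" and sm: "summable y" and n: "n \<ge> 1"
  shows "summable (\<lambda>i. y i ^ n)"
proof (rule summable_comparison_test')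
  show "summable (\<lambda>i. (suminf y) ^ (n - 1) * y i)" using sm by (rule summable_mult)
next
  fix i
  have "y i \<le> suminf y"
    using sum_le_suminf[OF sm, of "{i}"] nn by simp
  then have "y i ^ (n - 1) \<le> (suminf y) ^ (n - 1)" using nn by (rule power_mono)
  then have "y i ^ (n - 1) * y i \<le> (suminf y) ^ (n - 1) * y i" using nn by (rule mult_right_mono)
  then show "norm (y i ^ n) \<le> (suminf y) ^ (n - 1) * y i"
    using nn n by (simp add: power_eq_if[of _ n] mult.commute split: if_splits)
qed

lemma chord_inequality:
  fixes y :: "nat \<Rightarrow> real"
  assumes m: "m \<ge> 1" and nn: "\<And>i. 0 \<le> y i" and sm: "summable y"
  shows "0 \<le> real m * (real m + 1) * (\<Sum>i. y i ^ 3)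
    - (2 * real m + 1) * (\<Sum>i. y i ^ 2) * suminf y + (suminf y) ^ 3"
proof (rule LIMSEQ_le_const)
  have "summable (\<lambda>i. y i ^ 2)" "summable (\<lambda>i. y i ^ 3)"
    using nn sm by (auto intro: summable_power_nonneg)
  then show "(\<lambda>N. real m * (real m + 1) * (\<Sum>i<N. y i ^ 3)
        - (2 * real m + 1) * (\<Sum>i<N. y i ^ 2) * (\<Sum>i<N. y i) + (\<Sum>i<N. y i) ^ 3)
      \<longlonglongrightarrow> real m * (real m + 1) * (\<Sum>i. y i ^ 3)
        - (2 * real m + 1) * (\<Sum>i. y i ^ 2) * suminf y + (suminf y) ^ 3"
    using sm by (intro tendsto_intros summable_LIMSEQ)
  show "\<exists>N0. \<forall>N\<ge>N0. 0 \<le> real m * (real m + 1) * (\<Sum>i<N. y i ^ 3)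
        - (2 * real m + 1) * (\<Sum>i<N. y i ^ 2) * (\<Sum>i<N. y i) + (\<Sum>i<N. y i) ^ 3"
    using chord_inequality_finite[OF m] nn by blast
qed

lemma normalized_power_sums:
  fixes y :: "nat \<Rightarrow> real"
  assumes nn: "\<And>i. 0 \<le> y i" and sm: "summable y" and total: "suminf y = 1"
  shows "0 < (\<Sum>i. y i ^ 2)" "(\<Sum>i. y i ^ 2) \<le> 1" "(\<Sum>i. y i ^ 3) \<le> (\<Sum>i. y i ^ 2)"
    and "(\<Sum>i. y i ^ 3) = (\<Sum>i. y i ^ 2) \<Longrightarrow> (\<Sum>i. y i ^ 2) = 1"
proof -
  have sm2: "summable (\<lambda>i. y i ^ 2)" and sm3: "summable (\<lambda>i. y i ^ 3)"
    using nn sm by (auto intro: summable_power_nonneg)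
  have le1: "y i \<le> 1" for i
    using sum_le_suminf[OF sm, of "{i}"] nn total by simp
  have sq: "y i ^ 2 \<le> y i" and cube: "y i ^ 3 \<le> y i ^ 2" for i
    using le1[of i] nn[of i] by (simp_all add: power2_eq_square power3_eq_cube mult_left_le)
  have "y \<noteq> (\<lambda>_. 0)" using total by auto
  then obtain i where "y i \<noteq> 0" by auto
  then show "0 < (\<Sum>i. y i ^ 2)" using nn by (intro suminf_pos2[OF sm2, of i]) auto
  show "(\<Sum>i. y i ^ 2) \<le> 1" using suminf_le[OF sq sm2 sm] total by simp
  show "(\<Sum>i. y i ^ 3) \<le> (\<Sum>i. y i ^ 2)" using suminf_le[OF cube sm3 sm2] .
  assume "(\<Sum>i. y i ^ 3) = (\<Sum>i. y i ^ 2)"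
  then have "(\<Sum>i. y i ^ 2 - y i ^ 3) = 0" using suminf_diff[OF sm2 sm3] by simp
  then have "y i ^ 2 - y i ^ 3 = 0" for i
    using suminf_eq_zero_iff[OF summable_diff[OF sm2 sm3]] cube by auto
  then have "y i * y i * (1 - y i) = 0" for i
    by (simp add: algebra_simps power2_eq_square power3_eq_cube)
  then have "y i ^ 2 = y i" for i
    by (metis mult_eq_0_iff eq_iff_diff_eq_0 power2_eq_square mult_cancel_left1)
  then show "(\<Sum>i. y i ^ 2) = 1" using total by simp
qed

lemma convex_parabola_chord:
  fixes C :: "(real \<times> real) set"
  assumes C: "convex C" and a: "(a, a\<^sup>2) \<in> C" and b: "(b, b\<^sup>2) \<in> C" and s: "b \<le> s" "s \<le> a"
  shows "(s, (a + b) * s - a * b) \<in> C"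
proof (cases "a = b")
  case True
  then show ?thesis using a s by (simp add: power2_eq_square algebra_simps)
next
  case False
  define \<mu> where "\<mu> = (s - a) / (b - a)"
  have "b < a" using False s by simp
  then have \<mu>: "0 \<le> \<mu>" "\<mu> \<le> 1" "\<mu> * (b - a) = s - a" using s by (auto simp: \<mu>_def field_simps)
  have "(1 - \<mu>) *\<^sub>R (a, a\<^sup>2) + \<mu> *\<^sub>R (b, b\<^sup>2) \<in> C"
    using convexD[OF C a b] \<mu> by simp
  moreover have "(1 - \<mu>) * a + \<mu> * b = a + \<mu> * (b - a)"
    by (simp add: algebra_simps)
  moreover have "(1 - \<mu>) * a\<^sup>2 + \<mu> * b\<^sup>2 = a\<^sup>2 + \<mu> * (b - a) * (b + a)"
    by (simp add: algebra_simps power2_eq_square)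
  moreover have "a\<^sup>2 + (s - a) * (b + a) = (a + b) * s - a * b"
    by (simp add: algebra_simps power2_eq_square)
  ultimately show ?thesis using \<mu>(3) by simp
qed

lemma convex_vertical_segment:
  fixes C :: "(real \<times> real) set"
  assumes C: "convex C" and "(s, l) \<in> C" "l \<le> t" and "(s, u) \<in> C" "t \<le> u"
  shows "(s, t) \<in> C"
proof (cases "l = u")
  case True
  then show ?thesis using assms by simp
next
  case False
  define \<mu> where "\<mu> = (t - l) / (u - l)"
  have "l < u" using False assms by simp
  then have \<mu>: "0 \<le> \<mu>" "\<mu> \<le> 1" "\<mu> * (u - l) = t - l" using assms by (auto simp: \<mu>_def field_simps)
  have "(1 - \<mu>) *\<^sub>R (s, l) + \<mu> *\<^sub>R (s, u) \<in> C"
    using convexD[OF C assms(2,4)] \<mu> by simp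
  moreover have "(1 - \<mu>) * l + \<mu> * u = l + \<mu> * (u - l)" "(1 - \<mu>) * s + \<mu> * s = s"
    by (simp_all add: algebra_simps)
  ultimately show ?thesis using \<mu>(3) by simp
qed

abbreviation unit_fraction_points :: "(real \<times> real) set" where
  "unit_fraction_points \<equiv> {(1 / real m, 1 / (real m) ^ 2) | m :: nat. m \<ge> 1}"

lemma unit_fraction_point_in_hull:
  "m \<ge> 1 \<Longrightarrow> (1 / real m, (1 / real m)\<^sup>2) \<in> convex hull unit_fraction_points"
  by (rule hull_inc) (auto simp: power_divide)

lemma power_sum_point_above_hull:
  fixes y :: "nat \<Rightarrow> real"
  assumes nn: "\<And>i. 0 \<le> y i" and sm: "summable y" and total: "suminf y = 1"
  shows "\<exists>l. ((\<Sum>i. y i ^ 2), l) \<in> convex hull unit_fraction_points \<and> l \<le> (\<Sum>i. y i ^ 3)"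
proof -
  define s t where "s = (\<Sum>i. y i ^ 2)" and "t = (\<Sum>i. y i ^ 3)"
  note bounds = normalized_power_sums[OF nn sm total, folded s_def t_def]
  define m where "m = nat \<lfloor>1 / s\<rfloor>"
  have "1 \<le> 1 / s" using bounds(1,2) by simp
  then have m: "m \<ge> 1" "real m \<le> 1 / s" "1 / s < real m + 1"
    unfolding m_def by linarith+
  then have s_between: "1 / real (m + 1) \<le> s" "s \<le> 1 / real m"
    using bounds(1) by (simp_all add: field_simps)
  define l where "l = (1 / real m + 1 / real (m + 1)) * s - 1 / real m * (1 / real (m + 1))"
  have "(s, l) \<in> convex hull unit_fraction_points"
    unfolding l_def using s_between
    by (intro convex_parabola_chord unit_fraction_point_in_hull convex_convex_hull m(1)) simp_all
  moreover have "l \<le> t"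
  proof -
    have "real m > 0" using m(1) by simp
    then have "real m * (real m + 1) * l = (2 * real m + 1) * s - 1"
      by (simp add: l_def field_simps) (simp add: add_nonneg_eq_0_iff)
    also have "\<dots> \<le> real m * (real m + 1) * t"
      using chord_inequality[OF m(1) nn sm] by (simp add: total s_def t_def)
    finally show ?thesis using m(1) by (simp add: mult_le_cancel_left_pos)
  qed
  ultimately show ?thesis unfolding s_def t_def by blast
qed

lemma power_sum_point_below_hull:
  fixes y :: "nat \<Rightarrow> real"
  assumes nn: "\<And>i. 0 \<le> y i" and sm: "summable y" and total: "suminf y = 1"
  shows "\<exists>u. ((\<Sum>i. y i ^ 2), u) \<in> convex hull unit_fraction_points \<and> (\<Sum>i. y i ^ 3) \<le> u"
proof -
  define s t where "s = (\<Sum>i. y i ^ 2)" and "t = (\<Sum>i. y i ^ 3)"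
  note bounds = normalized_power_sums[OF nn sm total, folded s_def t_def]
  obtain M :: nat where M: "M \<ge> 1" "1 / real M \<le> s" "1 - s \<le> real M * (s - t)"
  proof (cases "t < s")
    case True
    obtain M :: nat where M: "max (1 / s) ((1 - s) / (s - t)) < real M"
      using reals_Archimedean2 by blast
    moreover have "1 \<le> 1 / s" using bounds(1,2) by simp
    ultimately have "M \<ge> 1" by simp
    then show ?thesis
      using that[of M] M True bounds(1) by (simp add: field_simps)
  next
    case False
    then have "s = 1" "t = 1" using bounds(3,4) by auto
    then show ?thesis using that[of 1] by simp
  qed
  define u where "u = (1 + 1 / real M) * s - 1 * (1 / real M)"
  have "(s, u) \<in> convex hull unit_fraction_points"
    unfolding u_def using unit_fraction_point_in_hull[of 1] M(2) bounds(2)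
    by (intro convex_parabola_chord unit_fraction_point_in_hull convex_convex_hull M(1)) simp_all
  moreover have "t \<le> u"
  proof -
    have "real M > 0" using M(1) by simp
    then have "real M * u = real M * s + s - 1" by (simp add: u_def field_simps)
    moreover have "real M * (s - t) = real M * s - real M * t" by (simp add: algebra_simps)
    ultimately have "real M * t \<le> real M * u" using M(3) by linarith
    then show ?thesis using \<open>real M > 0\<close> by simp
  qed
  ultimately show ?thesis unfolding s_def t_def by blast
qed

lemma power_sum_point_in_hull:
  fixes y :: "nat \<Rightarrow> real"
  assumes "\<And>i. 0 \<le> y i" and "summable y" and "suminf y = 1"
  shows "((\<Sum>i. y i ^ 2), (\<Sum>i. y i ^ 3)) \<in> convex hull unit_fraction_points"
proof -
  obtain l u where "((\<Sum>i. y i ^ 2), l) \<in> convex hull unit_fraction_points" "l \<le> (\<Sum>i. y i ^ 3)"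
    and "((\<Sum>i. y i ^ 2), u) \<in> convex hull unit_fraction_points" "(\<Sum>i. y i ^ 3) \<le> u"
    using power_sum_point_above_hull[OF assms] power_sum_point_below_hull[OF assms] by blast
  then show ?thesis by (rule convex_vertical_segment[OF convex_convex_hull])
qed

lemma psum_divide_power:
  assumes "\<And>i. 0 \<le> x i" and "summable x" and "j \<ge> 1"
  shows "psum j x / c ^ j = (\<Sum>i. (x i / c) ^ j)"
  unfolding psum_def power_divide
  using suminf_divide[OF summable_power_nonneg[OF assms]] by simp

lemma uniform_seq_in_seqX: "0 \<le> a \<Longrightarrow> (\<lambda>i. if i < m then a else 0) \<in> seqX"
  unfolding seqX_def by (auto intro: summable_finite[of "{..<m}"])

lemma psum_uniform_seq:
  assumes "j \<ge> 1"
  shows "psum j (\<lambda>i. if i < m then a else 0) = real m * a ^ j"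
proof -
  have "psum j (\<lambda>i. if i < m then a else 0) = (\<Sum>i<m. (if i < m then a else 0) ^ j)"
    unfolding psum_def by (rule suminf_finite) (use assms in auto)
  then show ?thesis by simp
qed

lemma scaled_power_sum_point_in_hull:
  assumes "x \<in> seqX" and "psum 1 x = \<alpha>" and "\<alpha> > 0"
  shows "(psum 2 x / \<alpha> ^ 2, psum 3 x / \<alpha> ^ 3) \<in> convex hull unit_fraction_points"
proof -
  have x: "\<And>i. 0 \<le> x i" "summable x" using assms(1) by (auto simp: seqX_def)
  have "(\<Sum>i. x i / \<alpha>) = 1"
    using psum_divide_power[OF x, of 1 \<alpha>] assms(2,3) by simp
  then have "((\<Sum>i. (x i / \<alpha>) ^ 2), (\<Sum>i. (x i / \<alpha>) ^ 3)) \<in> convex hull unit_fraction_points"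
    using x assms(3) by (intro power_sum_point_in_hull summable_divide) simp_all
  then show ?thesis using psum_divide_power[OF x] by simp
qed

lemma unit_fraction_point_attained:
  assumes "m \<ge> 1" and "\<alpha> > 0"
  shows "(1 / real m, 1 / (real m) ^ 2)
    \<in> {(psum 2 x / \<alpha> ^ 2, psum 3 x / \<alpha> ^ 3) | x. x \<in> seqX \<and> psum 1 x = \<alpha>}"
proof -
  define x where "x = (\<lambda>i. if i < m then \<alpha> / real m else 0)"
  have "x \<in> seqX" unfolding x_def using assms by (intro uniform_seq_in_seqX) simp
  moreover have "psum 1 x = \<alpha>" "psum 2 x / \<alpha> ^ 2 = 1 / real m" "psum 3 x / \<alpha> ^ 3 = 1 / (real m) ^ 2"
    using assms unfolding x_def
    by (simp_all add: psum_uniform_seq power_divide power2_eq_square power3_eq_cube)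
  ultimately show ?thesis by (intro CollectI exI[of _ x]) simp
qed

theorem lemmaA4:
  fixes \<alpha> :: real
  assumes "\<alpha> > 0"
  shows "convex hull {(psum 2 x / \<alpha> ^ 2, psum 3 x / \<alpha> ^ 3) | x. x \<in> seqX \<and> psum 1 x = \<alpha>}
       = convex hull {(1 / real m, 1 / (real m) ^ 2) | m :: nat. m \<ge> 1}"
proof (rule antisym)
  let ?A = "{(psum 2 x / \<alpha> ^ 2, psum 3 x / \<alpha> ^ 3) | x. x \<in> seqX \<and> psum 1 x = \<alpha>}"
  have "?A \<subseteq> convex hull unit_fraction_points"
    using scaled_power_sum_point_in_hull assms by blast
  then show "convex hull ?A \<subseteq> convex hull unit_fraction_points"
    by (rule hull_minimal[where S = convex, OF _ convex_convex_hull])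
  have "unit_fraction_points \<subseteq> ?A"
    using unit_fraction_point_attained assms by blast
  then show "convex hull unit_fraction_points \<subseteq> convex hull ?A"
    by (rule hull_mono)
qed

end
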